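(* Let $T_{init}$ be the number of nodes of the initial tree. The expected optimization time of (1+1) GP-single on MO-WORDER is $O(T_{init}+n\log n)$.
   Context: Fix an integer $n\ge 1$ and real weights $w_1\ge w_2\ge\dots\ge w_n>0$. The terminal set is $T=\{x_1,\bar x_1,\dots,x_n,\bar x_n\}$ ($\bar x_i$ is the complement of $x_i$; $x_i$ is called positive). A syntax tree is either the empty tree or a rooted ordered binary tree whose inner nodes are all labelled by the binary function $J$ (join, exactly two ordered children) and whose leaves are labelled by elements of $T$. The complexity $C(X)$ is the number of nodes of $X$ (0 for the empty tree). The leaf list $l$ of $X$ is the sequence of leaf labels in an inorder traversal. WORDER: build a list $S$ by scanning $l$ from front to rear and appending a literal only if neither it nor its complement is already in $S$; WORDER$(X)=\sum_{i:\,x_i\in S} w_i$. MO-WORDER$(X)=(\mathrm{WORDER}(X),C(X))$, WORDER to be maximized and $C$ minimized. Mutation (HVL-Prime applied $k$ times): each application chooses uniformly at random one of three operations. Substitute: replace a uniformly random leaf by a uniformly random $u\in T$. Insert: choose a uniformly random node $v$ and uniformly random $u\in T$, replace $v$ by a $J$-node with children $u$ and $v$ in uniformly random order (inserting into the empty tree yields the single leaf $u$). Delete: choose a uniformly random leaf $v$ with parent $p$ and sibling $u$, replace $p$ by $u$ (deleting $p$ and $v$; deleting the only leaf of a one-leaf tree yields the empty tree). Single-operation mutation uses $k=1$. (1+1) GP-single on MO-$F$: start with an initial tree $X$; in each iteration let $Y$ be $X$ mutated with $k=1$, and set $X:=Y$ iff $F(Y)>F(X)$, or $F(Y)=F(X)$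 and $C(Y)\le C(X)$. Expected optimization time: expected number of iterations (fitness evaluations) until the current solution is for the first time optimal, i.e. has maximum possible $F$-value and, among such trees, minimum complexity. *)

theory Defs
  imports "HOL-Probability.Probability"
begin

text \<open>Literals: (i, True) is x_i, (i, False) is its complement.\<close>
type_synonym lit = "nat \<times> bool"

text \<open>Non-empty syntax trees; the empty tree is represented by None.\<close>
datatype stree = Leaf lit | Jn stree stree

type_synonym tree = "stree option"

definition Tn :: "nat \<Rightarrow> lit set" where
  "Tn n = {1..n} \<times> UNIV"

fun snodes :: "stree \<Rightarrow> nat" where
  "snodes (Leaf a) = 1"
| "snodes (Jn l r) = 1 + snodes l + snodes r"

definition cplx :: "tree \<Rightarrow> nat" where
  "cplx X = (case X of None \<Rightarrow> 0 | Some t \<Rightarrow> snodes t)"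

fun sleaves :: "stree \<Rightarrow> lit list" where
  "sleaves (Leaf a) = [a]"
| "sleaves (Jn l r) = sleaves l @ sleaves r"

definition leaves :: "tree \<Rightarrow> lit list" where
  "leaves X = (case X of None \<Rightarrow> [] | Some t \<Rightarrow> sleaves t)"

definition over_terms :: "nat \<Rightarrow> tree \<Rightarrow> bool" where
  "over_terms n X \<longleftrightarrow> set (leaves X) \<subseteq> Tn n"

fun scanS :: "nat set \<Rightarrow> lit list \<Rightarrow> lit list" where
  "scanS seen [] = []"
| "scanS seen ((i, b) # xs) =
     (if i \<in> seen then scanS seen xs else (i, b) # scanS (insert i seen) xs)"

definition worder :: "(nat \<Rightarrow> real) \<Rightarrow> tree \<Rightarrow> real" where
  "worder w X = sum_list (map (\<lambda>(i, b). if b then w i else 0) (scanS {} (leaves X)))"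

definition optimal :: "nat \<Rightarrow> (nat \<Rightarrow> real) \<Rightarrow> tree \<Rightarrow> bool" where
  "optimal n w X \<longleftrightarrow> over_terms n X \<and>
     (\<forall>Y. over_terms n Y \<longrightarrow> worder w Y \<le> worder w X \<and>
          (worder w Y = worder w X \<longrightarrow> cplx X \<le> cplx Y))"

text \<open>Node positions as paths (False = left child, True = right child).\<close>
fun paths :: "stree \<Rightarrow> bool list set" where
  "paths (Leaf a) = {[]}"
| "paths (Jn l r) = insert [] ((#) False ` paths l \<union> (#) True ` paths r)"

fun lpaths :: "stree \<Rightarrow> bool list set" where
  "lpaths (Leaf a) = {[]}"
| "lpaths (Jn l r) = (#) False ` lpaths l \<union> (#) True ` lpaths r"

fun modify_at :: "(stree \<Rightarrow> stree) \<Rightarrow> bool list \<Rightarrow> stree \<Rightarrow> stree" where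
  "modify_at f [] t = f t"
| "modify_at f (False # p) (Jn l r) = Jn (modify_at f p l) r"
| "modify_at f (True # p) (Jn l r) = Jn l (modify_at f p r)"
| "modify_at f (d # p) (Leaf a) = Leaf a"

text \<open>Delete the leaf at path p: its parent is replaced by its sibling.\<close>
definition del_leaf :: "stree \<Rightarrow> bool list \<Rightarrow> tree" where
  "del_leaf t p = (if p = [] then None else
     Some (modify_at (\<lambda>par. case par of Jn l r \<Rightarrow> (if last p then l else r) | x \<Rightarrow> x)
                     (butlast p) t))"

definition mut_sub :: "nat \<Rightarrow> stree \<Rightarrow> tree pmf" where
  "mut_sub n t = do {
     p \<leftarrow> pmf_of_set (lpaths t);
     u \<leftarrow> pmf_of_set (Tn n);
     return_pmf (Some (modify_at (\<lambda>_. Leaf u) p t)) }"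

definition mut_ins :: "nat \<Rightarrow> stree \<Rightarrow> tree pmf" where
  "mut_ins n t = do {
     p \<leftarrow> pmf_of_set (paths t);
     u \<leftarrow> pmf_of_set (Tn n);
     b \<leftarrow> bernoulli_pmf (1/2);
     return_pmf (Some (modify_at (\<lambda>v. if b then Jn (Leaf u) v else Jn v (Leaf u)) p t)) }"

definition mut_del :: "stree \<Rightarrow> tree pmf" where
  "mut_del t = do {
     p \<leftarrow> pmf_of_set (lpaths t);
     return_pmf (del_leaf t p) }"

text \<open>One application of HVL-Prime (k = 1). On the empty tree, substitution and
  deletion have no leaf to act on and leave the tree unchanged.\<close>
definition mutate :: "nat \<Rightarrow> tree \<Rightarrow> tree pmf" where
  "mutate n X = do {
     op \<leftarrow> pmf_of_set {0, 1, 2 :: nat};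
     (case X of
        None \<Rightarrow> (if op = 1 then map_pmf (\<lambda>u. Some (Leaf u)) (pmf_of_set (Tn n))
                 else return_pmf None)
      | Some t \<Rightarrow> (if op = 0 then mut_sub n t else if op = 1 then mut_ins n t
                   else mut_del t)) }"

definition gp_step :: "nat \<Rightarrow> (nat \<Rightarrow> real) \<Rightarrow> tree \<Rightarrow> tree pmf" where
  "gp_step n w X = do {
     Y \<leftarrow> mutate n X;
     return_pmf (if worder w Y > worder w X \<or>
                    (worder w Y = worder w X \<and> cplx Y \<le> cplx X) then Y else X) }"

definition gp_stopped_step :: "nat \<Rightarrow> (nat \<Rightarrow> real) \<Rightarrow> tree \<Rightarrow> tree pmf" where
  "gp_stopped_step n w X = (if optimal n w X then return_pmf X else gp_step n w X)"

fun state_dist :: "nat \<Rightarrow> (nat \<Rightarrow> real) \<Rightarrow> tree \<Rightarrow> nat \<Rightarrow> tree pmf" where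
  "state_dist n w X0 0 = return_pmf X0"
| "state_dist n w X0 (Suc t) = bind_pmf (state_dist n w X0 t) (gp_stopped_step n w)"

text \<open>Expected optimization time E[T] = sum over t of P(T > t), where T is the first
  iteration index at which the current solution is optimal.\<close>
definition exp_opt_time :: "nat \<Rightarrow> (nat \<Rightarrow> real) \<Rightarrow> tree \<Rightarrow> ennreal" where
  "exp_opt_time n w X0 =
     (\<Sum>t. ennreal (measure_pmf.prob (state_dist n w X0 t) {X. \<not> optimal n w X}))"

end

theory Submission
  imports Defs
begin

text \<open>
  WORDER only depends on the set of indices whose first literal in the leaf list is positive
  (the ``positive-first'' indices).  Write \<open>L\<close> for the number of leaves, \<open>P\<close> for the number of
  positive-first indices, \<open>K = L - P\<close> for the surplus of leaves and \<open>D = n - P\<close> for the number of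
  missing variables; a tree over the terminals with \<open>K = D = 0\<close> is optimal.
  Every mutation acts on the leaf list as one substitution, insertion or deletion, and whenever
  the offspring is accepted \<open>P\<close> does not decrease and \<open>K\<close> does not increase.
  With the potential \<open>g = 3K + 3n H\<^sub>K + 6n H\<^sub>D\<close> (\<open>H\<close> harmonic numbers) every non-optimal step
  decreases \<open>g\<close> by at least 1 in expectation: if \<open>K > 0\<close> at least \<open>K\<close> leaves can be deleted
  harmlessly, and if \<open>K = 0 < D\<close> inserting one of the \<open>D\<close> missing positive literals is accepted.
  A general additive drift lemma then bounds the expected optimisation time by \<open>g(X\<^sub>0)\<close>, and an
  elementary estimate gives \<open>g(X\<^sub>0) \<le> 30 (C(X\<^sub>0) + n ln n)\<close> for \<open>n \<ge> 2\<close>.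
\<close>

subsection \<open>Positive-first indices of a literal list\<close>

definition first_occ :: "lit list \<Rightarrow> nat \<Rightarrow> lit option" where
  "first_occ l i = find (\<lambda>x. fst x = i) l"

text \<open>The indices whose first occurrence in \<open>l\<close> is the positive literal; these are exactly
  the indices counted by WORDER.\<close>
definition pos_first :: "lit list \<Rightarrow> nat set" where
  "pos_first l = {i. first_occ l i = Some (i, True)}"

lemma find_append:
  "find P (xs @ ys) = (case find P xs of None \<Rightarrow> find P ys | Some x \<Rightarrow> Some x)"
  by (induction xs) auto

lemma first_occ_skip: "fst a \<noteq> i \<Longrightarrow> first_occ (xs @ a # ys) i = first_occ (xs @ ys) i"
  unfolding first_occ_def by (induction xs) simp_all

lemma pos_first_skip:
  "fst a \<noteq> i \<Longrightarrow> i \<in> pos_first (xs @ a # ys) \<longleftrightarrow> i \<in> pos_first (xs @ ys)"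
  unfolding pos_first_def using first_occ_skip by simp

lemma pos_first_subset: "pos_first l \<subseteq> fst ` set l"
  unfolding pos_first_def first_occ_def find_Some_iff by force

lemma finite_pos_first: "finite (pos_first l)"
  using pos_first_subset finite_subset by blast

lemma card_pos_first_le_length: "card (pos_first l) \<le> length l"
proof -
  have "card (pos_first l) \<le> card (fst ` set l)"
    by (rule card_mono[OF finite_imageI[OF finite_set] pos_first_subset])
  also have "\<dots> \<le> card (set l)" by (rule card_image_le) simp
  also have "\<dots> \<le> length l" by (rule card_length)
  finally show ?thesis .
qed

lemma pos_first_Tn: "set l \<subseteq> Tn n \<Longrightarrow> pos_first l \<subseteq> {1..n}"
  using pos_first_subset[of l] by (force simp: Tn_def)

lemma sum_scanS:
  "sum_list (map (\<lambda>(i, b). if b then w i else 0) (scanS seen l)) =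
   (\<Sum>i \<in> {i. i \<notin> seen \<and> first_occ l i = Some (i, True)}. w i)"
proof (induction l arbitrary: seen)
  case Nil
  then show ?case by (simp add: first_occ_def)
next
  case (Cons a xs)
  obtain j b where a: "a = (j, b)" by force
  let ?S = "\<lambda>S. {i. i \<notin> S \<and> first_occ xs i = Some (i, True)}"
  have fin: "finite (?S S)" for S
    by (rule finite_subset[OF _ finite_pos_first[of xs]]) (auto simp: pos_first_def)
  consider "j \<in> seen" | "j \<notin> seen" "b" | "j \<notin> seen" "\<not> b" by blast
  then show ?case
  proof cases
    case 1
    then have "{i. i \<notin> seen \<and> first_occ (a # xs) i = Some (i, True)} = ?S seen"
      using a by (auto simp: first_occ_def)
    then show ?thesis using 1 a Cons by simp
  next
    case 2
    then have "{i. i \<notin> seen \<and> first_occ (a # xs) i = Some (i, True)} = insert j (?S (insert j seen))"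
      using a by (auto simp: first_occ_def)
    then show ?thesis using 2 a Cons fin by simp
  next
    case 3
    then have "{i. i \<notin> seen \<and> first_occ (a # xs) i = Some (i, True)} = ?S (insert j seen)"
      using a by (auto simp: first_occ_def)
    then show ?thesis using 3 a Cons by simp
  qed
qed

lemma worder_pos_first: "worder w X = (\<Sum>i \<in> pos_first (leaves X). w i)"
  unfolding worder_def sum_scanS pos_first_def by simp

lemma worder_mono:
  assumes wpos: "\<forall>i\<in>{1..n}. w i > 0" and oY: "over_terms n Y"
    and sub: "pos_first (leaves X) \<subseteq> pos_first (leaves Y)"
  shows "worder w X \<le> worder w Y"
proof -
  have "pos_first (leaves Y) \<subseteq> {1..n}" using oY pos_first_Tn by (simp add: over_terms_def)
  then have "\<forall>i\<in>pos_first (leaves Y). w i \<ge> 0" using wpos by (auto intro: less_imp_le)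
  then show ?thesis unfolding worder_pos_first by (intro sum_mono2[OF finite_pos_first sub]) auto
qed

definition pos_first_at :: "lit list \<Rightarrow> nat \<Rightarrow> bool" where
  "pos_first_at l k \<longleftrightarrow> snd (l ! k) \<and> fst (l ! k) \<notin> fst ` set (take k l)"

lemma pos_first_delete:
  assumes "k < length l" "\<not> pos_first_at l k"
  shows "pos_first l \<subseteq> pos_first (take k l @ drop (Suc k) l)"
proof
  fix i assume i: "i \<in> pos_first l"
  define xs where "xs = take k l"
  define ys where "ys = drop (Suc k) l"
  define x where "x = l ! k"
  have l: "l = xs @ x # ys" using assms(1) by (simp add: id_take_nth_drop xs_def ys_def x_def)
  show "i \<in> pos_first (take k l @ drop (Suc k) l)"
  proof (cases "fst x = i")
    case False
    have "i \<in> pos_first (xs @ x # ys)" using i l by simp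
    then show ?thesis using pos_first_skip[OF False, of xs ys] by (simp add: xs_def ys_def)
  next
    case True
    show ?thesis
    proof (cases "find (\<lambda>x. fst x = i) xs")
      case None
      have "first_occ l i = Some x"
        using None True unfolding first_occ_def by (subst l) (simp add: find_append)
      moreover have "fst x \<notin> fst ` set xs"
        using None True unfolding find_None_iff by fastforce
      moreover have "first_occ l i = Some (i, True)" using i by (simp add: pos_first_def)
      ultimately have "x = (i, True)" "fst x \<notin> fst ` set xs" by simp_all
      then have "pos_first_at l k" unfolding pos_first_at_def x_def[symmetric] xs_def[symmetric]
        by simp
      then show ?thesis using assms(2) by simp
    next
      case (Some z)
      then have "first_occ l i = Some z" "first_occ (xs @ ys) i = Some z"
        using l unfolding first_occ_def by (simp_all add: find_append)
      then show ?thesis using i by (simp add: pos_first_def xs_def ys_def)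
    qed
  qed
qed

text \<open>Distinct entries making their index positive-first have distinct indices, so there are at
  most as many of them as positive-first indices.\<close>
lemma card_pos_first_at: "card {k. k < length l \<and> pos_first_at l k} \<le> card (pos_first l)"
proof (rule card_inj_on_le[where f = "\<lambda>k. fst (l ! k)"])
  have earlier: "fst (l ! j) \<noteq> fst (l ! k)" if "j < k" "k < length l" "pos_first_at l k" for j k
  proof -
    have "fst (l ! j) \<in> fst ` set (take k l)" using that by (intro imageI) (auto simp: in_set_conv_nth)
    then show ?thesis using that(3) unfolding pos_first_at_def by metis
  qed
  show "inj_on (\<lambda>k. fst (l ! k)) {k. k < length l \<and> pos_first_at l k}"
    by (rule inj_onI) (metis (no_types, lifting) earlier linorder_neqE_nat mem_Collect_eq)
  show "(\<lambda>k. fst (l ! k)) ` {k. k < length l \<and> pos_first_at l k} \<subseteq> pos_first l"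
  proof
    fix a assume "a \<in> (\<lambda>k. fst (l ! k)) ` {k. k < length l \<and> pos_first_at l k}"
    then obtain k where k: "k < length l" "pos_first_at l k" "a = fst (l ! k)" by auto
    have "\<forall>j<k. fst (l ! j) \<noteq> a" using earlier k by auto
    then have "first_occ l a = Some (l ! k)" unfolding first_occ_def find_Some_iff using k by auto
    moreover have "l ! k = (a, True)" using k by (cases "l ! k") (auto simp: pos_first_at_def)
    ultimately show "a \<in> pos_first l" by (simp add: pos_first_def)
  qed
  show "finite (pos_first l)" by (rule finite_pos_first)
qed

lemma card_harmless_deletions:
  "length l - card (pos_first l) \<le> card {k. k < length l \<and> \<not> pos_first_at l k}"
proof -
  let ?A = "{k. k < length l \<and> \<not> pos_first_at l k}" and ?B = "{k. k < length l \<and> pos_first_at l k}"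
  have "card ?A + card ?B = card (?A \<union> ?B)"
    by (rule card_Un_disjoint[symmetric]) (auto intro: finite_subset[of _ "{..<length l}"])
  also have "?A \<union> ?B = {..<length l}" by auto
  finally show ?thesis using card_pos_first_at[of l] by simp
qed

lemma pos_first_insert_fresh:
  assumes "j \<notin> fst ` set l"
  shows "pos_first (take k l @ (j, True) # drop k l) = insert j (pos_first l)"
proof (rule set_eqI)
  fix i
  show "i \<in> pos_first (take k l @ (j, True) # drop k l) \<longleftrightarrow> i \<in> insert j (pos_first l)"
  proof (cases "i = j")
    case True
    have "fst ` set (take k l) \<subseteq> fst ` set l" by (rule image_mono[OF set_take_subset])
    then have "find (\<lambda>x. fst x = j) (take k l) = None" unfolding find_None_iff using assms by fastforce
    then have "first_occ (take k l @ (j, True) # drop k l) j = Some (j, True)"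
      unfolding first_occ_def by (simp add: find_append)
    then show ?thesis using True by (simp add: pos_first_def)
  next
    case False
    then show ?thesis using pos_first_skip[of "(j, True)" i "take k l" "drop k l"] by simp
  qed
qed

lemma card_le_if_sum_le:
  fixes w :: "nat \<Rightarrow> real"
  assumes fA: "finite A" and fB: "finite B" and d: "A - B \<subseteq> {a, b}" "B - A \<subseteq> {a, b}"
    and pos: "\<forall>i\<in>A. w i > 0" and s: "sum w A \<le> sum w B"
  shows "card A \<le> card B"
proof (rule ccontr)
  assume c: "\<not> card A \<le> card B"
  show False
  proof (cases "B - A = {}")
    case True
    then have BA: "B \<subseteq> A" by blast
    have ne: "A - B \<noteq> {}" using BA c card_mono[OF fA] by auto
    have "sum w A = sum w (A - B) + sum w B" using sum.subset_diff[OF BA fA] .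
    moreover have "sum w (A - B) > 0" using ne fA pos by (intro sum_pos) auto
    ultimately show False using s by simp
  next
    case False
    then obtain x where x: "x \<in> B" "x \<notin> A" by blast
    have "A - B \<subseteq> {a, b} - {x}" using d(1) x by blast
    then have "card (A - B) \<le> card ({a, b} - {x})" by (intro card_mono) auto
    also have "\<dots> \<le> 1" using x d(2) by (cases "a = b") (auto simp: card_insert_if)
    finally have "card (A - B) \<le> 1" .
    moreover have "card (B - A) \<ge> 1" using x fB by (simp add: Suc_le_eq card_gt_0_iff) blast
    moreover have "card A = card (A \<inter> B) + card (A - B)" using card_Int_Diff[OF fA] .
    moreover have "card B = card (B \<inter> A) + card (B - A)" using card_Int_Diff[OF fB] .
    ultimately show False using c by (simp add: Int_commute)
  qed
qed

lemma card_less_if_sum_less: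
  fixes w :: "nat \<Rightarrow> real"
  assumes "finite A" "finite B" "A - B \<subseteq> {b}" "B - A \<subseteq> {b}" "\<forall>i\<in>A. w i \<ge> 0"
    "sum w A < sum w B"
  shows "card A < card B"
proof -
  have "b \<in> B"
  proof (rule ccontr)
    assume "b \<notin> B"
    then have "B \<subseteq> A" using assms(4) by blast
    then have "sum w B \<le> sum w A" using assms(1,5) by (intro sum_mono2) auto
    then show False using assms(6) by simp
  qed
  then have "A \<subset> B" using assms(3,6) by auto
  then show ?thesis using assms(2) by (simp add: psubset_card_mono)
qed

subsection \<open>Mutations act on the leaf list as single edits\<close>

text \<open>Left-to-right enumeration of the leaf positions of a tree; the \<open>k\<close>-th path leads to the
  \<open>k\<close>-th leaf in inorder.\<close>
fun leaf_path_list :: "stree \<Rightarrow> bool list list" where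
  "leaf_path_list (Leaf a) = [[]]"
| "leaf_path_list (Jn l r) = map ((#) False) (leaf_path_list l) @ map ((#) True) (leaf_path_list r)"

lemma set_leaf_path_list: "set (leaf_path_list t) = lpaths t"
  by (induction t) auto

lemma distinct_leaf_path_list: "distinct (leaf_path_list t)"
  by (induction t) (auto simp: distinct_map)

lemma length_leaf_path_list: "length (leaf_path_list t) = length (sleaves t)"
  by (induction t) auto

lemma lpaths_nth: "p \<in> lpaths t \<Longrightarrow> \<exists>k < length (sleaves t). p = leaf_path_list t ! k"
  by (auto simp: in_set_conv_nth length_leaf_path_list simp flip: set_leaf_path_list)

lemma sleaves_nonempty: "sleaves t \<noteq> []"
  by (induction t) auto

lemma finite_lpaths: "finite (lpaths t)" and lpaths_nonempty: "lpaths t \<noteq> {}"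
  using length_leaf_path_list[of t] sleaves_nonempty[of t] by (auto simp flip: set_leaf_path_list)

lemma finite_paths: "finite (paths t)"
  by (induction t) auto

lemma paths_nonempty: "paths t \<noteq> {}"
  by (cases t) auto

lemma Nil_in_lpaths: "[] \<in> lpaths t \<Longrightarrow> \<exists>a. t = Leaf a"
  by (cases t) auto

text \<open>A binary tree has one inner node less than leaves.\<close>
lemma snodes_sleaves: "snodes t + 1 = 2 * length (sleaves t)"
  by (induction t) auto

lemma leaves_substitute:
  "k < length (sleaves t) \<Longrightarrow> sleaves (modify_at (\<lambda>_. Leaf u) (leaf_path_list t ! k) t)
     = take k (sleaves t) @ u # drop (Suc k) (sleaves t)"
proof (induction t arbitrary: k)
  case (Leaf a)
  then show ?case by simp
next
  case (Jn l r)
  show ?case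
  proof (cases "k < length (sleaves l)")
    case True
    then have "leaf_path_list (Jn l r) ! k = False # (leaf_path_list l ! k)"
      by (simp add: nth_append length_leaf_path_list)
    then show ?thesis using Jn.IH(1)[OF True] True by simp
  next
    case False
    define k' where "k' = k - length (sleaves l)"
    have k': "k' < length (sleaves r)" using Jn.prems False by (simp add: k'_def)
    have "leaf_path_list (Jn l r) ! k = True # (leaf_path_list r ! k')"
      using False k' by (simp add: nth_append length_leaf_path_list k'_def)
    then show ?thesis using Jn.IH(2)[OF k'] False by (simp add: k'_def Suc_diff_le)
  qed
qed

lemma leaves_delete:
  "k < length (sleaves t) \<Longrightarrow>
     leaves (del_leaf t (leaf_path_list t ! k)) = take k (sleaves t) @ drop (Suc k) (sleaves t)"
proof (induction t arbitrary: k)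
  case (Leaf a)
  then show ?case by (simp add: del_leaf_def leaves_def)
next
  case (Jn l r)
  show ?case
  proof (cases "k < length (sleaves l)")
    case True
    define q where "q = leaf_path_list l ! k"
    have p: "leaf_path_list (Jn l r) ! k = False # q"
      using True by (simp add: nth_append length_leaf_path_list q_def)
    have "q \<in> lpaths l" using True by (simp add: q_def length_leaf_path_list flip: set_leaf_path_list)
    show ?thesis
    proof (cases "q = []")
      case True
      then obtain a where "l = Leaf a" using Nil_in_lpaths \<open>q \<in> lpaths l\<close> by blast
      then show ?thesis using p True \<open>k < length (sleaves l)\<close> by (simp add: del_leaf_def leaves_def)
    next
      case False
      have "leaves (del_leaf l q) = take k (sleaves l) @ drop (Suc k) (sleaves l)"
        using Jn.IH(1)[OF \<open>k < length (sleaves l)\<close>] q_def by simp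
      then show ?thesis using p False \<open>k < length (sleaves l)\<close>
        by (simp add: del_leaf_def leaves_def butlast.simps(2) split: if_splits)
    qed
  next
    case False
    define k' where "k' = k - length (sleaves l)"
    have k': "k' < length (sleaves r)" using Jn.prems False by (simp add: k'_def)
    define q where "q = leaf_path_list r ! k'"
    have p: "leaf_path_list (Jn l r) ! k = True # q"
      using False k' by (simp add: nth_append length_leaf_path_list k'_def q_def)
    have "q \<in> lpaths r" using k' by (simp add: q_def length_leaf_path_list flip: set_leaf_path_list)
    have k: "k = length (sleaves l) + k'" using False by (simp add: k'_def)
    show ?thesis
    proof (cases "q = []")
      case True
      then obtain a where "r = Leaf a" using Nil_in_lpaths \<open>q \<in> lpaths r\<close> by blast
      then show ?thesis using p True k' k by (simp add: del_leaf_def leaves_def)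
    next
      case False
      have "leaves (del_leaf r q) = take k' (sleaves r) @ drop (Suc k') (sleaves r)"
        using Jn.IH(2)[OF k'] q_def by simp
      then show ?thesis using p False k
        by (simp add: del_leaf_def leaves_def butlast.simps(2) split: if_splits)
    qed
  qed
qed

lemma leaves_insert:
  assumes "p \<in> paths t"
  shows "\<exists>k \<le> length (sleaves t). sleaves (modify_at (\<lambda>v. if b then Jn (Leaf u) v else Jn v (Leaf u)) p t)
           = take k (sleaves t) @ u # drop k (sleaves t)"
  using assms
proof (induction t arbitrary: p)
  case (Leaf a)
  then show ?case by (cases b) (auto intro: exI[of _ 0] exI[of _ 1])
next
  case (Jn l r)
  let ?f = "\<lambda>v. if b then Jn (Leaf u) v else Jn v (Leaf u)"
  consider "p = []" | q where "p = False # q" "q \<in> paths l" | q where "p = True # q" "q \<in> paths r"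
    using Jn.prems by auto
  then show ?case
  proof cases
    case 1
    then show ?thesis by (cases b) (auto intro: exI[of _ 0] exI[of _ "length (sleaves (Jn l r))"])
  next
    case 2
    then obtain k where "k \<le> length (sleaves l)"
      "sleaves (modify_at ?f q l) = take k (sleaves l) @ u # drop k (sleaves l)"
      using Jn.IH(1) by blast
    then show ?thesis using 2 by (intro exI[of _ k]) auto
  next
    case 3
    then obtain k where "k \<le> length (sleaves r)"
      "sleaves (modify_at ?f q r) = take k (sleaves r) @ u # drop k (sleaves r)"
      using Jn.IH(2) by blast
    then show ?thesis using 3 by (intro exI[of _ "length (sleaves l) + k"]) auto
  qed
qed

definition single_edit :: "lit set \<Rightarrow> lit list \<Rightarrow> lit list \<Rightarrow> bool" where
  "single_edit U l l' \<longleftrightarrow> l' = l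
     \<or> (\<exists>k<length l. \<exists>u\<in>U. l' = take k l @ u # drop (Suc k) l)
     \<or> (\<exists>k\<le>length l. \<exists>u\<in>U. l' = take k l @ u # drop k l)
     \<or> (\<exists>k<length l. l' = take k l @ drop (Suc k) l)"

lemma single_edit_set: "single_edit U l l' \<Longrightarrow> set l' \<subseteq> set l \<union> U"
  unfolding single_edit_def by (auto dest: in_set_takeD in_set_dropD)

lemma card_Tn: "card (Tn n) = 2 * n"
  by (simp add: Tn_def card_cartesian_product)

lemma finite_Tn: "finite (Tn n)"
  by (simp add: Tn_def)

lemma Tn_nonempty: "n \<ge> 1 \<Longrightarrow> Tn n \<noteq> {}"
  by (auto simp: Tn_def)

lemma single_edit_mut_sub:
  assumes "n \<ge> 1" "Y \<in> set_pmf (mut_sub n t)"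
  shows "single_edit (Tn n) (sleaves t) (leaves Y)"
proof -
  obtain p u where "p \<in> lpaths t" "u \<in> Tn n" "Y = Some (modify_at (\<lambda>_. Leaf u) p t)"
    using assms by (auto simp: mut_sub_def finite_Tn Tn_nonempty finite_lpaths lpaths_nonempty)
  moreover obtain k where "k < length (sleaves t)" "p = leaf_path_list t ! k"
    using lpaths_nth \<open>p \<in> lpaths t\<close> by blast
  ultimately show ?thesis using leaves_substitute by (auto simp: single_edit_def leaves_def)
qed

lemma single_edit_mut_ins:
  assumes "n \<ge> 1" "Y \<in> set_pmf (mut_ins n t)"
  shows "single_edit (Tn n) (sleaves t) (leaves Y)"
proof -
  obtain p u b where "p \<in> paths t" "u \<in> Tn n"
    "Y = Some (modify_at (\<lambda>v. if b then Jn (Leaf u) v else Jn v (Leaf u)) p t)"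
    using assms by (auto simp: mut_ins_def finite_Tn Tn_nonempty finite_paths paths_nonempty)
  then show ?thesis using leaves_insert[of p t b u] by (auto simp: single_edit_def leaves_def)
qed

lemma single_edit_mut_del:
  assumes "Y \<in> set_pmf (mut_del t)"
  shows "single_edit U (sleaves t) (leaves Y)"
proof -
  obtain p where "p \<in> lpaths t" "Y = del_leaf t p"
    using assms by (auto simp: mut_del_def finite_lpaths lpaths_nonempty)
  moreover obtain k where "k < length (sleaves t)" "p = leaf_path_list t ! k"
    using lpaths_nth \<open>p \<in> lpaths t\<close> by blast
  ultimately show ?thesis using leaves_delete by (auto simp: single_edit_def)
qed

lemma mutate_Some: "mutate n (Some t) = pmf_of_set {0, 1, 2::nat} \<bind>
   (\<lambda>op. if op = 0 then mut_sub n t else if op = 1 then mut_ins n t else mut_del t)"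
  by (simp add: mutate_def)

lemma mutate_None: "mutate n None = pmf_of_set {0, 1, 2::nat} \<bind>
   (\<lambda>op. if op = 1 then map_pmf (\<lambda>u. Some (Leaf u)) (pmf_of_set (Tn n)) else return_pmf None)"
  by (simp add: mutate_def)

lemma mutate_single_edit:
  assumes "n \<ge> 1" "Y \<in> set_pmf (mutate n X)"
  shows "single_edit (Tn n) (leaves X) (leaves Y)"
proof (cases X)
  case None
  then have "Y = None \<or> (\<exists>u\<in>Tn n. Y = Some (Leaf u))"
    using assms by (auto simp: mutate_None finite_Tn Tn_nonempty split: if_splits)
  then show ?thesis using None by (auto simp: single_edit_def leaves_def)
next
  case (Some t)
  then show ?thesis
    using assms single_edit_mut_sub single_edit_mut_ins single_edit_mut_del
    by (auto simp: mutate_Some leaves_def split: if_splits)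
qed

lemma mutate_over_terms:
  assumes "n \<ge> 1" "over_terms n X" "Y \<in> set_pmf (mutate n X)"
  shows "over_terms n Y"
  using single_edit_set[OF mutate_single_edit[OF assms(1,3)]] assms(2) by (auto simp: over_terms_def)

definition accept :: "(nat \<Rightarrow> real) \<Rightarrow> tree \<Rightarrow> tree \<Rightarrow> tree" where
  "accept w X Y =
     (if worder w Y > worder w X \<or> (worder w Y = worder w X \<and> cplx Y \<le> cplx X) then Y else X)"

lemma gp_step_accept: "gp_step n w X = map_pmf (accept w X) (mutate n X)"
  by (simp add: gp_step_def map_pmf_def accept_def)

definition nleaves :: "tree \<Rightarrow> nat" where
  "nleaves X = length (leaves X)"

definition npos :: "tree \<Rightarrow> nat" where
  "npos X = card (pos_first (leaves X))"

definition surplus :: "tree \<Rightarrow> nat" where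
  "surplus X = nleaves X - npos X"

definition deficit :: "nat \<Rightarrow> tree \<Rightarrow> nat" where
  "deficit n X = n - npos X"

lemma cplx_nleaves: "cplx X = 2 * nleaves X - 1"
proof (cases X)
  case (Some t)
  then show ?thesis using snodes_sleaves[of t] by (simp add: cplx_def nleaves_def leaves_def)
qed (simp add: cplx_def nleaves_def leaves_def)

lemma npos_le_nleaves: "npos X \<le> nleaves X"
  unfolding npos_def nleaves_def by (rule card_pos_first_le_length)

lemma npos_le_n: "over_terms n X \<Longrightarrow> npos X \<le> n"
  unfolding npos_def over_terms_def using pos_first_Tn card_mono[of "{1..n}"] by fastforce

text \<open>Substitutions and deletions change the positive-first set in at
  most two indices without lowering the weight, so its size cannot drop; an accepted insertion must
  strictly raise WORDER, hence adds a positive-first index.\<close>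
lemma accepted_edit_monotone:
  assumes wpos: "\<forall>i\<in>{1..n}. w i > 0" and oX: "over_terms n X" and oY: "over_terms n Y"
    and e: "single_edit U (leaves X) (leaves Y)"
    and a: "worder w Y > worder w X \<or> (worder w Y = worder w X \<and> cplx Y \<le> cplx X)"
  shows "npos X \<le> npos Y \<and> surplus Y \<le> surplus X"
proof -
  define l where "l = leaves X"
  define l' where "l' = leaves Y"
  have pA: "\<forall>i\<in>pos_first l. w i > 0"
    using oX pos_first_Tn wpos by (force simp: over_terms_def l_def)
  have ge: "sum w (pos_first l) \<le> sum w (pos_first l')"
    using a by (auto simp: worder_pos_first l_def l'_def)
  consider "l' = l" | (sub) k u where "k < length l" "l' = take k l @ u # drop (Suc k) l"
    | (ins) k u where "l' = take k l @ u # drop k l"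
    | (del) k where "k < length l" "l' = take k l @ drop (Suc k) l"
    using e unfolding single_edit_def l_def[symmetric] l'_def[symmetric] by blast
  then have "card (pos_first l) \<le> card (pos_first l')
      \<and> length l' - card (pos_first l') \<le> length l - card (pos_first l)"
  proof cases
    case 1 then show ?thesis by simp
  next
    case (sub k u)
    have "i \<in> pos_first l \<longleftrightarrow> i \<in> pos_first l'" if "i \<noteq> fst (l ! k)" "i \<noteq> fst u" for i
      using pos_first_skip[of "l ! k" i] pos_first_skip[of u i] that sub id_take_nth_drop[OF sub(1)]
      by metis
    then have "card (pos_first l) \<le> card (pos_first l')"
      by (intro card_le_if_sum_le[OF finite_pos_first finite_pos_first _ _ pA ge,
            of "fst (l ! k)" "fst u"]) blast+
    then show ?thesis using sub by simp
  next
    case (ins k u)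
    have "i \<in> pos_first l \<longleftrightarrow> i \<in> pos_first l'" if "i \<noteq> fst u" for i
      using pos_first_skip[of u i "take k l" "drop k l"] that ins by simp
    moreover have "cplx Y > cplx X"
      using ins cplx_nleaves[of X] cplx_nleaves[of Y] by (simp add: nleaves_def l_def l'_def)
    then have "sum w (pos_first l) < sum w (pos_first l')"
      using a by (auto simp: worder_pos_first l_def l'_def)
    ultimately have "card (pos_first l) < card (pos_first l')"
      using pA by (intro card_less_if_sum_less[OF finite_pos_first finite_pos_first, where b = "fst u"])
        auto
    then show ?thesis using ins card_pos_first_le_length[of l'] by simp
  next
    case (del k)
    have "i \<in> pos_first l \<longleftrightarrow> i \<in> pos_first l'" if "i \<noteq> fst (l ! k)" for i
      using pos_first_skip[of "l ! k" i] that del id_take_nth_drop[OF del(1)] by metis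
    then have "card (pos_first l) \<le> card (pos_first l')"
      by (intro card_le_if_sum_le[OF finite_pos_first finite_pos_first _ _ pA ge,
            of "fst (l ! k)" "fst (l ! k)"]) blast+
    then show ?thesis using del by simp
  qed
  then show ?thesis by (simp add: npos_def surplus_def nleaves_def l_def l'_def)
qed

lemma accept_monotone:
  assumes n: "n \<ge> 1" and wpos: "\<forall>i\<in>{1..n}. w i > 0" and oX: "over_terms n X"
    and Y: "Y \<in> set_pmf (mutate n X)"
  shows "surplus (accept w X Y) \<le> surplus X \<and> npos X \<le> npos (accept w X Y)
    \<and> over_terms n (accept w X Y)"
  using accepted_edit_monotone[OF wpos oX mutate_over_terms[OF n oX Y] mutate_single_edit[OF n Y]]
    mutate_over_terms[OF n oX Y] oX
  by (auto simp: accept_def)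

text \<open>A tree over the terminals without surplus and without missing variables is optimal: it
  attains the maximal WORDER \<open>w 1 + \<dots> + w n\<close>, and every tree attaining it has at least \<open>n\<close>
  leaves.\<close>
lemma optimal_if_balanced:
  assumes wpos: "\<forall>i\<in>{1..n}. w i > 0" and oX: "over_terms n X"
    and K: "surplus X = 0" and D: "deficit n X = 0"
  shows "optimal n w X"
proof -
  have P: "npos X = n" using npos_le_n[OF oX] D by (simp add: deficit_def)
  have L: "nleaves X = n" using K P npos_le_nleaves[of X] by (simp add: surplus_def)
  have "pos_first (leaves X) \<subseteq> {1..n}" using oX pos_first_Tn by (simp add: over_terms_def)
  then have "pos_first (leaves X) = {1..n}" using P by (intro card_subset_eq) (auto simp: npos_def)
  then have wX: "worder w X = sum w {1..n}" by (simp add: worder_pos_first)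
  show ?thesis unfolding optimal_def
  proof (intro conjI allI impI)
    fix Y assume oY: "over_terms n Y"
    have sY: "pos_first (leaves Y) \<subseteq> {1..n}" using oY pos_first_Tn by (simp add: over_terms_def)
    have wY: "worder w Y = sum w (pos_first (leaves Y))" by (simp add: worder_pos_first)
    show "worder w Y \<le> worder w X" unfolding wY wX
      using wpos by (intro sum_mono2[OF _ sY]) (auto intro: less_imp_le)
    assume eq: "worder w Y = worder w X"
    have "pos_first (leaves Y) = {1..n}"
    proof (rule ccontr)
      assume "pos_first (leaves Y) \<noteq> {1..n}"
      then have "sum w ({1..n} - pos_first (leaves Y)) > 0" using sY wpos by (intro sum_pos) auto
      moreover have "sum w {1..n} = sum w ({1..n} - pos_first (leaves Y)) + sum w (pos_first (leaves Y))"
        using sum.subset_diff[OF sY] by simp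
      ultimately show False using eq wX wY by simp
    qed
    then have "n \<le> nleaves Y" using npos_le_nleaves[of Y] by (simp add: npos_def)
    then show "cplx X \<le> cplx Y" unfolding cplx_nleaves L by simp
  qed (rule oX)
qed

subsection \<open>The potential\<close>

text \<open>Potential of a tree with surplus \<open>k\<close> and \<open>d\<close> missing variables.  The harmonic terms make
  the gain of one improvement inversely proportional to its probability.\<close>
definition pot :: "nat \<Rightarrow> nat \<Rightarrow> nat \<Rightarrow> real" where
  "pot n k d = 3 * real k + 3 * real n * harm k + 6 * real n * harm d"

definition gpot :: "nat \<Rightarrow> tree \<Rightarrow> real" where
  "gpot n X = pot n (surplus X) (deficit n X)"

lemma pot_mono: "k \<le> k' \<Longrightarrow> d \<le> d' \<Longrightarrow> pot n k d \<le> pot n k' d'"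
  unfolding pot_def using harm_mono[of k k', where 'a=real] harm_mono[of d d', where 'a=real]
  by (intro add_mono mult_left_mono) auto

lemma gpot_nonneg: "gpot n X \<ge> 0"
  using harm_nonneg[where 'a=real] by (simp add: gpot_def pot_def)

lemma gpot_mono: "surplus Y \<le> surplus X \<Longrightarrow> npos X \<le> npos Y \<Longrightarrow> gpot n Y \<le> gpot n X"
  unfolding gpot_def deficit_def by (intro pot_mono) auto

lemma pot_drop_surplus: "k \<ge> 1 \<Longrightarrow> pot n (k - 1) d + (3 + 3 * real n / real k) = pot n k d"
  by (cases k) (auto simp: pot_def harm_Suc field_simps)

lemma pot_drop_deficit: "d \<ge> 1 \<Longrightarrow> pot n k (d - 1) + 6 * real n / real d = pot n k d"
  by (cases d) (auto simp: pot_def harm_Suc field_simps)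

lemma emeasure_bind_ge:
  assumes "\<And>x. x \<in> set_pmf p \<Longrightarrow> x \<in> A \<Longrightarrow> c \<le> emeasure (measure_pmf (f x)) B"
  shows "c * emeasure (measure_pmf p) A \<le> emeasure (measure_pmf (p \<bind> f)) B"
proof -
  have "c * emeasure (measure_pmf p) A = (\<integral>\<^sup>+x. c * indicator A x \<partial>measure_pmf p)"
    by (simp add: nn_integral_cmult_indicator)
  also have "\<dots> \<le> (\<integral>\<^sup>+x. emeasure (measure_pmf (f x)) B \<partial>measure_pmf p)"
    by (rule nn_integral_mono_AE) (auto simp: AE_measure_pmf_iff indicator_def assms)
  also have "\<dots> = emeasure (measure_pmf (p \<bind> f)) B" by simp
  finally show ?thesis .
qed

lemma emeasure_bind_ge_all:
  assumes "\<And>x. x \<in> set_pmf p \<Longrightarrow> c \<le> emeasure (measure_pmf (f x)) B"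
  shows "c \<le> emeasure (measure_pmf (p \<bind> f)) B"
  using emeasure_bind_ge[of p UNIV c f B] assms by (simp add: measure_pmf.emeasure_space_1)

lemma emeasure_choose_op_ge:
  assumes "i \<in> {0, 1, 2}" "ennreal q \<le> emeasure (measure_pmf (f i)) B" "0 \<le> q"
  shows "ennreal (q / 3) \<le> emeasure (measure_pmf (pmf_of_set {0, 1, 2::nat} \<bind> f)) B"
proof -
  have "emeasure (measure_pmf (pmf_of_set {0, 1, 2::nat})) {i} = ennreal (1/3)"
    using assms(1) by (auto simp: emeasure_pmf_single)
  then have "ennreal q * ennreal (1/3) \<le> emeasure (measure_pmf (pmf_of_set {0, 1, 2::nat} \<bind> f)) B"
    using emeasure_bind_ge[of "pmf_of_set {0, 1, 2::nat}" "{i}" "ennreal q" f B] assms(2) by auto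
  then show ?thesis using assms(3) by (simp add: ennreal_mult'' [symmetric])
qed

lemma emeasure_pmf_of_set_ge:
  assumes "finite S" "S \<noteq> {}" "A' \<subseteq> S \<inter> A"
  shows "ennreal (real (card A') / real (card S)) \<le> emeasure (measure_pmf (pmf_of_set S)) A"
proof -
  have "card A' \<le> card (S \<inter> A)" using assms by (intro card_mono) auto
  then have "real (card A') / real (card S) \<le> real (card (S \<inter> A)) / real (card S)"
    by (intro divide_right_mono) auto
  then show ?thesis
    using assms by (simp add: measure_pmf.emeasure_eq_measure measure_pmf_of_set ennreal_leI)
qed

lemma expected_drop:
  fixes M :: "'a pmf" and h :: "'a \<Rightarrow> real"
  assumes nonneg: "\<And>Y. Y \<in> set_pmf M \<Longrightarrow> 0 \<le> h Y"
    and no_increase: "\<And>Y. Y \<in> set_pmf M \<Longrightarrow> h Y \<le> c"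
    and gain: "\<And>Y. Y \<in> set_pmf M \<Longrightarrow> Y \<in> G \<Longrightarrow> h Y + \<delta> \<le> c"
    and prob: "ennreal q \<le> emeasure (measure_pmf M) G" and q: "0 \<le> q" "1 \<le> \<delta> * q"
  shows "(\<integral>\<^sup>+Y. ennreal (h Y) \<partial>measure_pmf M) + 1 \<le> ennreal c"
proof -
  have \<delta>: "0 \<le> \<delta>" using q mult_nonpos_nonneg[of \<delta> q] by linarith
  have "1 \<le> ennreal \<delta> * ennreal q" using q \<delta> by (simp add: ennreal_mult[symmetric])
  also have "\<dots> \<le> ennreal \<delta> * emeasure (measure_pmf M) G" by (rule mult_left_mono[OF prob]) simp
  finally have "(\<integral>\<^sup>+Y. ennreal (h Y) \<partial>measure_pmf M) + 1 \<le>
        (\<integral>\<^sup>+Y. ennreal (h Y) \<partial>measure_pmf M) + ennreal \<delta> * emeasure (measure_pmf M) G"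
    by (rule add_left_mono)
  also have "\<dots> = (\<integral>\<^sup>+Y. ennreal (h Y) + ennreal \<delta> * indicator G Y \<partial>measure_pmf M)"
    by (subst nn_integral_add) (auto simp: nn_integral_cmult_indicator)
  also have "\<dots> \<le> (\<integral>\<^sup>+Y. ennreal c \<partial>measure_pmf M)"
  proof (rule nn_integral_mono_AE, unfold AE_measure_pmf_iff, intro ballI)
    fix Y assume Y: "Y \<in> set_pmf M"
    show "ennreal (h Y) + ennreal \<delta> * indicator G Y \<le> ennreal c"
    proof (cases "Y \<in> G")
      case True
      then show ?thesis using Y gain \<delta> nonneg by (simp add: ennreal_plus[symmetric] ennreal_leI del: ennreal_plus)
    qed (use Y no_increase in \<open>simp add: ennreal_leI\<close>)
  qed
  also have "\<dots> = ennreal c" by (simp add: measure_pmf.emeasure_space_1)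
  finally show ?thesis .
qed

subsection \<open>Drift while there are surplus leaves\<close>

text \<open>Deleting the \<open>k\<close>-th leaf, where that leaf does not make its index positive-first, keeps
  WORDER, shrinks the tree and so is accepted; it lowers the surplus by one.\<close>
lemma harmless_deletion_gain:
  assumes wpos: "\<forall>i\<in>{1..n}. w i > 0" and oX: "over_terms n (Some t)"
    and k: "k < length (sleaves t)" and harmless: "\<not> pos_first_at (sleaves t) k"
    and K: "surplus (Some t) \<ge> 1"
    and Y: "Y = del_leaf t (leaf_path_list t ! k)"
  shows "accept w (Some t) Y = Y \<and> gpot n Y + (3 + 3 * real n / real (surplus (Some t))) \<le> gpot n (Some t)"
proof -
  have lY: "leaves Y = take k (sleaves t) @ drop (Suc k) (sleaves t)" using leaves_delete[OF k] Y by simp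
  have ps: "pos_first (leaves (Some t)) \<subseteq> pos_first (leaves Y)"
    unfolding lY using pos_first_delete[OF k harmless] by (simp add: leaves_def)
  have "set (leaves Y) \<subseteq> set (sleaves t)"
    unfolding lY by (auto dest: in_set_takeD in_set_dropD)
  then have oY: "over_terms n Y" using oX by (auto simp: over_terms_def leaves_def)
  have LY: "nleaves Y = nleaves (Some t) - 1" using k unfolding nleaves_def lY by (simp add: leaves_def)
  have "cplx Y \<le> cplx (Some t)" unfolding cplx_nleaves LY by simp
  moreover have "worder w (Some t) \<le> worder w Y" by (rule worder_mono[OF wpos oY ps])
  ultimately have "accept w (Some t) Y = Y" by (auto simp: accept_def)
  moreover have P: "npos (Some t) \<le> npos Y" unfolding npos_def by (rule card_mono[OF finite_pos_first ps])
  then have "gpot n Y \<le> pot n (surplus (Some t) - 1) (deficit n (Some t))"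
    unfolding gpot_def using LY K by (intro pot_mono) (auto simp: surplus_def deficit_def)
  ultimately show ?thesis using pot_drop_surplus[OF K, of n "deficit n (Some t)"] by (simp add: gpot_def)
qed

lemma prob_delete:
  assumes G: "G \<subseteq> {..<length (sleaves t)}"
  shows "ennreal (real (card G) / real (length (sleaves t)) / 3)
     \<le> emeasure (measure_pmf (mutate n (Some t))) ((\<lambda>k. del_leaf t (leaf_path_list t ! k)) ` G)"
proof -
  let ?Del = "(\<lambda>k. del_leaf t (leaf_path_list t ! k)) ` G"
  have md: "mut_del t = map_pmf (del_leaf t) (pmf_of_set (lpaths t))"
    by (simp add: mut_del_def map_pmf_def)
  have inj: "inj_on ((!) (leaf_path_list t)) G"
    by (rule inj_on_nth[OF distinct_leaf_path_list]) (use G in \<open>auto simp: length_leaf_path_list\<close>)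
  have card_lpaths: "card (lpaths t) = length (sleaves t)"
    using distinct_card[OF distinct_leaf_path_list[of t]]
    by (simp add: set_leaf_path_list length_leaf_path_list)
  have "(!) (leaf_path_list t) ` G \<subseteq> lpaths t \<inter> (del_leaf t -` ?Del)"
    using G by (auto simp: length_leaf_path_list simp flip: set_leaf_path_list)
  from emeasure_pmf_of_set_ge[OF finite_lpaths lpaths_nonempty this]
  have "ennreal (real (card G) / real (length (sleaves t))) \<le> emeasure (measure_pmf (mut_del t)) ?Del"
    unfolding md card_image[OF inj] card_lpaths by simp
  then show ?thesis unfolding mutate_Some by (intro emeasure_choose_op_ge[where i = 2]) auto
qed

text \<open>With surplus \<open>K \<ge> 1\<close> and \<open>L \<le> K + n\<close> leaves, at least \<open>K\<close> harmless deletions each gain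
  \<open>3 + 3n/K\<close>, so the expected potential drops by at least 1.\<close>
lemma drift_surplus:
  assumes n: "n \<ge> 1" and wpos: "\<forall>i\<in>{1..n}. w i > 0" and oX: "over_terms n X"
    and K: "surplus X \<ge> 1"
  shows "(\<integral>\<^sup>+Y. ennreal (gpot n (accept w X Y)) \<partial>measure_pmf (mutate n X)) + 1 \<le> ennreal (gpot n X)"
proof -
  obtain t where X: "X = Some t" using K by (cases X) (auto simp: surplus_def nleaves_def leaves_def)
  define L where "L = length (sleaves t)"
  define G where "G = {k. k < L \<and> \<not> pos_first_at (sleaves t) k}"
  define \<delta> where "\<delta> = 3 + 3 * real n / real (surplus X)"
  have cG: "surplus X \<le> card G"
    using card_harmless_deletions[of "sleaves t"]
    by (simp add: G_def L_def surplus_def nleaves_def npos_def X leaves_def)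
  have L: "L \<le> surplus X + n" "1 \<le> L"
    using npos_le_n[OF oX] npos_le_nleaves[of X] K by (auto simp: surplus_def nleaves_def X leaves_def L_def)
  have qd: "1 \<le> \<delta> * (real (card G) / real L / 3)"
  proof -
    have Kpos: "real (surplus X) > 0" using K by simp
    have "real L \<le> real (surplus X) + real n" using L by simp
    also have "\<dots> = (1 + real n / real (surplus X)) * real (surplus X)"
      using Kpos by (simp add: field_simps)
    also have "\<dots> \<le> (1 + real n / real (surplus X)) * real (card G)"
      using cG by (intro mult_left_mono) auto
    also have "\<dots> = \<delta> * (real (card G) / real L / 3) * real L"
      using L by (simp add: \<delta>_def field_simps)
    finally show ?thesis using L by simp
  qed
  have prob: "ennreal (real (card G) / real L / 3)
      \<le> emeasure (measure_pmf (mutate n X)) ((\<lambda>k. del_leaf t (leaf_path_list t ! k)) ` G)"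
    using prob_delete[of G t n] by (auto simp: G_def L_def X)
  show ?thesis
  proof (rule expected_drop[OF _ _ _ prob _ qd])
    fix Y assume Y: "Y \<in> set_pmf (mutate n X)"
    show "0 \<le> gpot n (accept w X Y)" by (rule gpot_nonneg)
    show "gpot n (accept w X Y) \<le> gpot n X"
      using accept_monotone[OF n wpos oX Y] by (intro gpot_mono) auto
    assume "Y \<in> (\<lambda>k. del_leaf t (leaf_path_list t ! k)) ` G"
    then show "gpot n (accept w X Y) + \<delta> \<le> gpot n X"
      using harmless_deletion_gain[OF wpos oX[unfolded X] _ _ K[unfolded X]]
      by (auto simp: G_def L_def \<delta>_def X)
  qed auto
qed

subsection \<open>Drift while variables are missing\<close>

lemma prob_insert:
  assumes n: "n \<ge> 1" and U: "U \<subseteq> Tn n"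
  shows "ennreal (real (card U) / real (2 * n) / 3) \<le> emeasure (measure_pmf (mutate n X))
     {Y. \<exists>k \<le> length (leaves X). \<exists>u\<in>U. leaves Y = take k (leaves X) @ u # drop k (leaves X)}"
    (is "_ \<le> emeasure _ ?Ins")
proof -
  have T: "finite (Tn n)" "Tn n \<noteq> {}" "card (Tn n) = 2 * n"
    using finite_Tn Tn_nonempty[OF n] card_Tn by auto
  have pU: "ennreal (real (card U) / real (2 * n)) \<le> emeasure (measure_pmf (pmf_of_set (Tn n))) U"
    using emeasure_pmf_of_set_ge[OF T(1,2), of U U] U unfolding T(3) by auto
  show ?thesis
  proof (cases X)
    case None
    have "U \<subseteq> Tn n \<inter> ((\<lambda>u. Some (Leaf u)) -` ?Ins)"
      using U by (auto simp: None leaves_def)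
    from emeasure_pmf_of_set_ge[OF T(1,2) this]
    have "ennreal (real (card U) / real (2 * n)) \<le>
        emeasure (measure_pmf (map_pmf (\<lambda>u. Some (Leaf u)) (pmf_of_set (Tn n)))) ?Ins"
      unfolding T(3) by simp
    then show ?thesis unfolding None mutate_None by (intro emeasure_choose_op_ge[where i = 1]) auto
  next
    case (Some t)
    have "ennreal (real (card U) / real (2 * n)) \<le> emeasure (measure_pmf (mut_ins n t)) ?Ins"
      unfolding mut_ins_def
    proof (rule emeasure_bind_ge_all)
      fix p assume "p \<in> set_pmf (pmf_of_set (paths t))"
      then have p: "p \<in> paths t" by (simp add: finite_paths paths_nonempty)
      have "ennreal (real (card U) / real (2 * n)) \<le> 1 * emeasure (measure_pmf (pmf_of_set (Tn n))) U"
        using pU by simp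
      also have "\<dots> \<le> emeasure (measure_pmf (pmf_of_set (Tn n) \<bind> (\<lambda>u. bernoulli_pmf (1/2) \<bind>
          (\<lambda>b. return_pmf (Some (modify_at (\<lambda>v. if b then Jn (Leaf u) v else Jn v (Leaf u)) p t)))))) ?Ins"
      proof (rule emeasure_bind_ge)
        fix u assume u: "u \<in> U"
        have "Some (modify_at (\<lambda>v. if b then Jn (Leaf u) v else Jn v (Leaf u)) p t) \<in> ?Ins" for b
          using leaves_insert[OF p, of b u] u by (auto simp: Some leaves_def)
        then show "1 \<le> emeasure (measure_pmf (bernoulli_pmf (1/2) \<bind>
          (\<lambda>b. return_pmf (Some (modify_at (\<lambda>v. if b then Jn (Leaf u) v else Jn v (Leaf u)) p t))))) ?Ins"
          by (subst measure_pmf.emeasure_eq_1_AE) (auto simp: AE_measure_pmf_iff)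
      qed
      finally show "ennreal (real (card U) / real (2 * n)) \<le> emeasure (measure_pmf (pmf_of_set (Tn n) \<bind> (\<lambda>u. bernoulli_pmf (1/2) \<bind>
          (\<lambda>b. return_pmf (Some (modify_at (\<lambda>v. if b then Jn (Leaf u) v else Jn v (Leaf u)) p t)))))) ?Ins" .
    qed
    then show ?thesis unfolding Some mutate_Some by (intro emeasure_choose_op_ge[where i = 1]) auto
  qed
qed

lemma fresh_insertion_gain:
  assumes wpos: "\<forall>i\<in>{1..n}. w i > 0" and K: "surplus X = 0" and D: "deficit n X \<ge> 1"
    and j: "j \<in> {1..n}" "j \<notin> fst ` set (leaves X)"
    and Y: "leaves Y = take k (leaves X) @ (j, True) # drop k (leaves X)"
  shows "accept w X Y = Y \<and> gpot n Y + 6 * real n / real (deficit n X) \<le> gpot n X"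
proof -
  have pY: "pos_first (leaves Y) = insert j (pos_first (leaves X))"
    using pos_first_insert_fresh[OF j(2)] Y by simp
  have jX: "j \<notin> pos_first (leaves X)" using j(2) pos_first_subset by blast
  have "worder w Y = worder w X + w j"
    unfolding worder_pos_first pY using jX finite_pos_first by simp
  then have "accept w X Y = Y" using wpos j(1) by (simp add: accept_def)
  moreover have "npos Y = npos X + 1" using pY jX finite_pos_first by (simp add: npos_def)
  moreover have "nleaves Y = nleaves X + 1" using Y by (simp add: nleaves_def)
  ultimately show ?thesis
    using K pot_drop_deficit[OF D, of n "surplus Y"] by (simp add: gpot_def surplus_def deficit_def)
qed

text \<open>With no surplus and \<open>D \<ge> 1\<close> missing variables, one of at least \<open>D\<close> fresh positive
  literals is inserted with probability at least \<open>D / (6 n)\<close>, gaining \<open>6 n / D\<close>.\<close>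
lemma drift_deficit:
  assumes n: "n \<ge> 1" and wpos: "\<forall>i\<in>{1..n}. w i > 0" and oX: "over_terms n X"
    and K: "surplus X = 0" and D: "deficit n X \<ge> 1"
  shows "(\<integral>\<^sup>+Y. ennreal (gpot n (accept w X Y)) \<partial>measure_pmf (mutate n X)) + 1 \<le> ennreal (gpot n X)"
proof -
  define M where "M = {1..n} - fst ` set (leaves X)"
  define U where "U = (\<lambda>j. (j, True)) ` M"
  define \<delta> where "\<delta> = 6 * real n / real (deficit n X)"
  have cU: "deficit n X \<le> card U"
  proof -
    have "card (fst ` set (leaves X)) \<le> nleaves X"
      unfolding nleaves_def using card_image_le[of "set (leaves X)" fst] card_length[of "leaves X"] by simp
    moreover have "n - card (fst ` set (leaves X)) \<le> card M"
      unfolding M_def using diff_card_le_card_Diff[of "fst ` set (leaves X)" "{1..n}"] by simp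
    moreover have "card U = card M" unfolding U_def by (rule card_image) (auto intro: inj_onI)
    ultimately show ?thesis using K by (simp add: deficit_def surplus_def)
  qed
  have "\<delta> * (real (card U) / real (2 * n) / 3) = real (card U) / real (deficit n X)"
    using n by (simp add: \<delta>_def)
  then have qd: "1 \<le> \<delta> * (real (card U) / real (2 * n) / 3)" using cU D by simp
  have "U \<subseteq> Tn n" by (auto simp: U_def M_def Tn_def)
  show ?thesis
  proof (rule expected_drop[OF _ _ _ prob_insert[OF n \<open>U \<subseteq> Tn n\<close>] _ qd])
    fix Y assume Y: "Y \<in> set_pmf (mutate n X)"
    show "0 \<le> gpot n (accept w X Y)" by (rule gpot_nonneg)
    show "gpot n (accept w X Y) \<le> gpot n X"
      using accept_monotone[OF n wpos oX Y] by (intro gpot_mono) auto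
    assume "Y \<in> {Y. \<exists>k \<le> length (leaves X). \<exists>u\<in>U. leaves Y = take k (leaves X) @ u # drop k (leaves X)}"
    then show "gpot n (accept w X Y) + \<delta> \<le> gpot n X"
      using fresh_insertion_gain[OF wpos K D] by (auto simp: U_def M_def \<delta>_def)
  qed auto
qed

subsection \<open>Additive drift\<close>

lemma additive_drift:
  fixes dist :: "nat \<Rightarrow> 'a pmf" and step :: "'a \<Rightarrow> 'a pmf" and g :: "'a \<Rightarrow> real"
  assumes dist_Suc: "\<And>t. dist (Suc t) = dist t \<bind> step"
    and inv_0: "\<And>x. x \<in> set_pmf (dist 0) \<Longrightarrow> I x"
    and inv_step: "\<And>x y. I x \<Longrightarrow> y \<in> set_pmf (step x) \<Longrightarrow> I y"
    and drift: "\<And>x. I x \<Longrightarrow>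
      (\<integral>\<^sup>+y. ennreal (g y) \<partial>measure_pmf (step x)) + indicator B x \<le> ennreal (g x)"
  shows "(\<Sum>t. emeasure (measure_pmf (dist t)) B) \<le> (\<integral>\<^sup>+x. ennreal (g x) \<partial>measure_pmf (dist 0))"
proof -
  let ?E = "\<lambda>t. \<integral>\<^sup>+x. ennreal (g x) \<partial>measure_pmf (dist t)"
  have inv: "\<forall>x \<in> set_pmf (dist t). I x" for t
    by (induction t) (use inv_0 inv_step in \<open>auto simp: dist_Suc\<close>)
  have one_step: "?E (Suc t) + emeasure (measure_pmf (dist t)) B \<le> ?E t" for t
  proof -
    have "?E (Suc t) + emeasure (measure_pmf (dist t)) B
      = (\<integral>\<^sup>+x. (\<integral>\<^sup>+y. ennreal (g y) \<partial>measure_pmf (step x)) + indicator B x \<partial>measure_pmf (dist t))"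
      by (simp add: dist_Suc nn_integral_add)
    also have "\<dots> \<le> ?E t"
      by (rule nn_integral_mono_AE) (use inv drift in \<open>auto simp: AE_measure_pmf_iff\<close>)
    finally show ?thesis .
  qed
  have partial: "?E T + (\<Sum>t<T. emeasure (measure_pmf (dist t)) B) \<le> ?E 0" for T
  proof (induction T)
    case (Suc T)
    have "?E (Suc T) + (\<Sum>t<Suc T. emeasure (measure_pmf (dist t)) B)
      = (?E (Suc T) + emeasure (measure_pmf (dist T)) B) + (\<Sum>t<T. emeasure (measure_pmf (dist t)) B)"
      by (simp add: add_ac)
    also have "\<dots> \<le> ?E T + (\<Sum>t<T. emeasure (measure_pmf (dist t)) B)"
      by (rule add_right_mono[OF one_step])
    also have "\<dots> \<le> ?E 0" by (rule Suc.IH)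
    finally show ?case .
  qed simp
  have "(\<Sum>t<T. emeasure (measure_pmf (dist t)) B) \<le> ?E 0" for T
    by (rule order_trans[OF add_increasing[OF zero_le order_refl] partial])
  then show ?thesis by (intro suminf_le_const) auto
qed

lemma stopped_step_drift:
  assumes n: "n \<ge> 1" and wpos: "\<forall>i\<in>{1..n}. w i > 0" and oX: "over_terms n X"
  shows "(\<integral>\<^sup>+Y. ennreal (gpot n Y) \<partial>measure_pmf (gp_stopped_step n w X))
          + indicator {X. \<not> optimal n w X} X \<le> ennreal (gpot n X)"
proof (cases "optimal n w X")
  case False
  then have "surplus X \<ge> 1 \<or> (surplus X = 0 \<and> deficit n X \<ge> 1)"
    using optimal_if_balanced[OF wpos oX] by fastforce
  then have "(\<integral>\<^sup>+Y. ennreal (gpot n (accept w X Y)) \<partial>measure_pmf (mutate n X)) + 1 \<le> ennreal (gpot n X)"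
    using drift_surplus[OF n wpos oX] drift_deficit[OF n wpos oX] by blast
  then show ?thesis using False by (simp add: gp_stopped_step_def gp_step_accept)
qed (simp add: gp_stopped_step_def)

lemma stopped_step_over_terms:
  assumes n: "n \<ge> 1" and wpos: "\<forall>i\<in>{1..n}. w i > 0" and oX: "over_terms n X"
    and Y: "Y \<in> set_pmf (gp_stopped_step n w X)"
  shows "over_terms n Y"
  using Y accept_monotone[OF n wpos oX] oX
  by (auto simp: gp_stopped_step_def gp_step_accept split: if_splits)

lemma exp_opt_time_le_gpot:
  assumes n: "n \<ge> 1" and wpos: "\<forall>i\<in>{1..n}. w i > 0" and oX: "over_terms n X0"
  shows "exp_opt_time n w X0 \<le> ennreal (gpot n X0)"
proof -
  have "(\<Sum>t. emeasure (measure_pmf (state_dist n w X0 t)) {X. \<not> optimal n w X})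
      \<le> (\<integral>\<^sup>+X. ennreal (gpot n X) \<partial>measure_pmf (state_dist n w X0 0))"
    by (rule additive_drift[where I = "over_terms n" and step = "gp_stopped_step n w"])
       (use oX stopped_step_over_terms[OF n wpos] stopped_step_drift[OF n wpos] in auto)
  then show ?thesis by (simp add: exp_opt_time_def measure_pmf.emeasure_eq_measure)
qed

lemma harm_le_ln: "m \<ge> 1 \<Longrightarrow> (harm m :: real) \<le> ln (real m) + 1"
  using euler_mascheroni_sequence_decreasing[of 1 m] by (simp add: harm_def)

text \<open>\<open>n ln K\<close> is dominated by \<open>n ln n\<close> if \<open>K \<le> n\<^sup>2\<close> and by \<open>K\<close> otherwise.\<close>
lemma n_ln_le:
  assumes "n \<ge> 1" "K \<ge> 1"
  shows "real n * ln (real K) \<le> 2 * real n * ln (real n) + 2 * real K"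
proof (cases "real K \<le> (real n)\<^sup>2")
  case True
  have "ln (real K) \<le> ln ((real n)\<^sup>2)" using True assms by (subst ln_le_cancel_iff) auto
  also have "\<dots> = 2 * ln (real n)" by (simp add: ln_realpow)
  finally have "real n * ln (real K) \<le> real n * (2 * ln (real n))" by (intro mult_left_mono) auto
  then show ?thesis by simp
next
  case False
  then have ns: "real n < sqrt (real K)" by (intro real_less_rsqrt) simp
  have sK: "sqrt (real K) > 0" using assms by simp
  have "ln (sqrt (real K)) \<le> sqrt (real K) - 1" by (rule ln_le_minus_one[OF sK])
  then have lK: "ln (real K) \<le> 2 * sqrt (real K)" by (simp add: ln_sqrt)
  have "real n * ln (real K) \<le> sqrt (real K) * ln (real K)" using ns assms by (intro mult_right_mono) auto
  also have "\<dots> \<le> sqrt (real K) * (2 * sqrt (real K))" using lK sK by (intro mult_left_mono) auto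
  also have "\<dots> = 2 * real K" by simp
  finally have "real n * ln (real K) \<le> 2 * real K" .
  moreover have "0 \<le> 2 * real n * ln (real n)" using assms by simp
  ultimately show ?thesis by linarith
qed

lemma pot_le:
  assumes n: "n \<ge> 2" and d: "d \<le> n"
  shows "pot n k d \<le> 30 * (real k + real n * ln (real n))"
proof -
  have "ln 2 \<le> ln (real n)" using n by (subst ln_le_cancel_iff) auto
  then have ln2: "1/2 \<le> ln (real n)" using ln2_ge_two_thirds by linarith
  have harm_d: "harm d \<le> ln (real n) + (1::real)"
    using harm_mono[OF d, where 'a=real] harm_le_ln[of n] n by linarith
  have harm_k: "real n * harm k \<le> 2 * real n * ln (real n) + 2 * real k + real n"
  proof (cases "k = 0")
    case False
    then have "real n * harm k \<le> real n * (ln (real k) + 1)"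
      using harm_le_ln[of k] by (intro mult_left_mono) auto
    then show ?thesis using n_ln_le[of n k] n False by (simp add: algebra_simps)
  qed (use ln2 in \<open>simp add: harm_def\<close>)
  have "pot n k d \<le> 9 * real k + 9 * real n + 12 * (real n * ln (real n))"
    using harm_k mult_left_mono[OF harm_d, of "6 * real n"] by (simp add: pot_def algebra_simps)
  also have "9 * real n \<le> 18 * (real n * ln (real n))" using mult_left_mono[OF ln2, of "real n"] by simp
  finally show ?thesis by simp
qed

lemma gpot_le:
  assumes "n \<ge> 2"
  shows "gpot n X \<le> 30 * (real (cplx X) + real n * ln (real n))"
proof -
  have "surplus X \<le> cplx X" unfolding surplus_def cplx_nleaves by simp
  then show ?thesis
    using pot_le[OF assms, of "deficit n X" "surplus X"] by (simp add: gpot_def deficit_def)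
qed

text \<open>The bound holds with constant 30 for all \<open>n \<ge> 2\<close>.\<close>
theorem theorem2:
  shows "\<exists>c::real. c > 0 \<and> (\<exists>N::nat. \<forall>n \<ge> N. \<forall>(w::nat \<Rightarrow> real) (X0::tree).
           n \<ge> 1 \<longrightarrow>
           (\<forall>i j. 1 \<le> i \<longrightarrow> i \<le> j \<longrightarrow> j \<le> n \<longrightarrow> w j \<le> w i) \<longrightarrow>
           (\<forall>i \<in> {1..n}. w i > 0) \<longrightarrow>
           over_terms n X0 \<longrightarrow>
           exp_opt_time n w X0 \<le> ennreal (c * (real (cplx X0) + real n * ln (real n))))"
proof -
  have "exp_opt_time n w X0 \<le> ennreal (30 * (real (cplx X0) + real n * ln (real n)))"
    if n: "n \<ge> 2" and wpos: "\<forall>i \<in> {1..n}. w i > 0" and oX: "over_terms n X0" for n w X0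
  proof -
    have "exp_opt_time n w X0 \<le> ennreal (gpot n X0)"
      using exp_opt_time_le_gpot[OF _ wpos oX] n by simp
    also have "\<dots> \<le> ennreal (30 * (real (cplx X0) + real n * ln (real n)))"
      by (rule ennreal_leI[OF gpot_le[OF n]])
    finally show ?thesis .
  qed
  then show ?thesis by (intro exI[of _ 30] conjI exI[of _ 2]) auto
qed

end
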